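(* Assume all agents share a common sense of direction. Then the leader election problem can be solved in $O(\log^2 N)$ rounds in the basic model with $n$ even, and in $\log N$ rounds in the other settings (the basic model with $n$ odd, the lazy model, and the perceptive model).
   Context: Model: $n>4$ agents are at distinct, arbitrary initial positions on a circle of circumference $1$ and act in synchronised unit-time rounds. At the start of a round each agent chooses a direction and moves at unit speed. Agents never pass: two moving agents that collide instantly reverse direction, and a moving agent hitting an idle one becomes idle while the idle one starts moving in the former's direction. There is no communication. At the end of each round an agent learns the clockwise distance from its start-of-round to its end-of-round position. The three models differ as follows: - Basic: direction in $\{\text{right},\text{left}\}$. - Lazy: direction in $\{\text{idle},\text{right},\text{left}\}$. - Perceptive: as basic, plus the agent learns the distance from its start position to its first collision in the round. Agents have distinct IDs in $\{1,\dots,N\}$, $N\ge n$ known, and know the parity of $n$. Leader election is solved when exactly one agent has status "leader" and all others "non-leader". *)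

theory Defs
  imports "HOL-Analysis.Analysis"
begin

(* Directions chosen by an agent.  Common sense of direction: Right = clockwise
   = increasing coordinate on the circle R/Z for every agent. *)
datatype dir = Right | Left | Idle

datatype model = Basic | Lazy | Perceptive

definition allowed :: "model \<Rightarrow> dir \<Rightarrow> bool" where
  "allowed m d = (if m = Lazy then True else d \<noteq> Idle)"

definition vel :: "dir \<Rightarrow> real" where
  "vel d = (case d of Right \<Rightarrow> 1 | Left \<Rightarrow> -1 | Idle \<Rightarrow> 0)"

(* Circle of circumference 1 = [0,1) with coordinates mod 1.  Dynamics within one
   round (time t in [0,1]): collisions exchange velocities (two movers reverse,
   a mover hitting an idle agent stops and the idle one moves on).  This is
   modelled by "ghost" particles on the universal cover R: ghost (j,k) starts at
   p j + k and moves with constant velocity v j; the agents are the order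
   statistics of the ghost configuration (agents never pass). *)
definition ghost :: "(nat \<Rightarrow> real) \<Rightarrow> (nat \<Rightarrow> real) \<Rightarrow> nat \<Rightarrow> int \<Rightarrow> real \<Rightarrow> real" where
  "ghost p v j k t = p j + real_of_int k + v j * t"

definition gcount :: "nat \<Rightarrow> (nat \<Rightarrow> real) \<Rightarrow> (nat \<Rightarrow> real) \<Rightarrow> real \<Rightarrow> real \<Rightarrow> int" where
  "gcount n p v t y =
     int (card {(j,k). j < n \<and> k \<ge> 0 \<and> ghost p v j k t \<le> y})
   - int (card {(j,k). j < n \<and> k < 0 \<and> ghost p v j k t > y})"

(* position (on the cover) at time t of the m-th lifted agent *)
definition traj :: "nat \<Rightarrow> (nat \<Rightarrow> real) \<Rightarrow> (nat \<Rightarrow> real) \<Rightarrow> int \<Rightarrow> real \<Rightarrow> real" where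
  "traj n p v m t = Inf {y. gcount n p v t y \<ge> m + 1}"

definition rank :: "nat \<Rightarrow> (nat \<Rightarrow> real) \<Rightarrow> nat \<Rightarrow> nat" where
  "rank n p i = card {j. j < n \<and> p j < p i}"

definition atraj :: "nat \<Rightarrow> (nat \<Rightarrow> real) \<Rightarrow> (nat \<Rightarrow> real) \<Rightarrow> nat \<Rightarrow> real \<Rightarrow> real" where
  "atraj n p v i t = traj n p v (int (rank n p i)) t"

definition coll_times :: "nat \<Rightarrow> (nat \<Rightarrow> real) \<Rightarrow> (nat \<Rightarrow> real) \<Rightarrow> nat \<Rightarrow> real set" where
  "coll_times n p v i =
     {t. 0 < t \<and> t \<le> 1 \<and>
        (traj n p v (int (rank n p i) - 1) t = atraj n p v i t \<or>
         traj n p v (int (rank n p i) + 1) t = atraj n p v i t)}"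

(* distance travelled (at unit speed) from the start position to the first
   collision, if any collision happens in the round *)
definition first_coll :: "nat \<Rightarrow> (nat \<Rightarrow> real) \<Rightarrow> (nat \<Rightarrow> real) \<Rightarrow> nat \<Rightarrow> real option" where
  "first_coll n p v i =
     (if coll_times n p v i = {} then None else Some (Inf (coll_times n p v i)))"

(* observation at the end of a round: clockwise distance start -> end, and
   (perceptive model only) the distance to the first collision *)
type_synonym obs = "real \<times> real option"

(* A deterministic algorithm (which may depend on the known N and parity of n,
   since it is chosen after them): given own ID and the history of own
   observations, choose a direction; at the end, decide leader status. *)
type_synonym algo = "(nat \<Rightarrow> obs list \<Rightarrow> dir) \<times> (nat \<Rightarrow> obs list \<Rightarrow> bool)"

definition valid_algo :: "model \<Rightarrow> algo \<Rightarrow> bool" where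
  "valid_algo m A = (\<forall>id h. allowed m (fst A id h))"

definition round_step ::
  "model \<Rightarrow> nat \<Rightarrow> (nat \<Rightarrow> nat) \<Rightarrow> algo \<Rightarrow>
   (nat \<Rightarrow> real) \<times> (nat \<Rightarrow> obs list) \<Rightarrow> (nat \<Rightarrow> real) \<times> (nat \<Rightarrow> obs list)" where
  "round_step m n ids A s =
     (let p = fst s; h = snd s;
          v = (\<lambda>i. vel (fst A (ids i) (h i)));
          ob = (\<lambda>i. (frac (atraj n p v i 1 - p i),
                     if m = Perceptive then first_coll n p v i else None))
      in (\<lambda>i. frac (atraj n p v i 1), \<lambda>i. h i @ [ob i]))"

definition run ::
  "model \<Rightarrow> nat \<Rightarrow> (nat \<Rightarrow> nat) \<Rightarrow> (nat \<Rightarrow> real) \<Rightarrow> algo \<Rightarrow> nat \<Rightarrow>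
   (nat \<Rightarrow> real) \<times> (nat \<Rightarrow> obs list)" where
  "run m n ids p0 A r = (round_step m n ids A ^^ r) (p0, \<lambda>i. [])"

definition valid_instance :: "nat \<Rightarrow> nat \<Rightarrow> (nat \<Rightarrow> nat) \<Rightarrow> (nat \<Rightarrow> real) \<Rightarrow> bool" where
  "valid_instance N n ids p =
     (4 < n \<and> n \<le> N \<and> inj_on ids {..<n} \<and> (\<forall>i<n. 1 \<le> ids i \<and> ids i \<le> N) \<and>
      inj_on p {..<n} \<and> (\<forall>i<n. 0 \<le> p i \<and> p i < 1))"

definition elects :: "model \<Rightarrow> nat \<Rightarrow> (nat \<Rightarrow> nat) \<Rightarrow> (nat \<Rightarrow> real) \<Rightarrow> algo \<Rightarrow> nat \<Rightarrow> bool" where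
  "elects m n ids p0 A T =
     (\<exists>!i. i < n \<and> snd A (ids i) (snd (run m n ids p0 A T) i))"

definition solves :: "model \<Rightarrow> nat \<Rightarrow> bool \<Rightarrow> algo \<Rightarrow> nat \<Rightarrow> bool" where
  "solves m N par A T =
     (valid_algo m A \<and>
      (\<forall>n ids p. valid_instance N n ids p \<and> even n = par \<longrightarrow> elects m n ids p A T))"

end

theory Submission
  imports Defs
begin

text \<open>Colliding agents exchange velocities, so the agents on the circle move like independent
  ghosts, while keeping their cyclic order.  If every agent moves with velocity in
  \<open>{-1, 0, 1}\<close> for one time unit, the ghost configuration is the initial one, shifted by the
  total velocity \<open>S\<close>: the agent of rank \<open>r\<close> ends at the start position of the agent of rank
  \<open>r + S mod n\<close>.  Hence every agent observes displacement \<open>0\<close> exactly when \<open>n\<close> divides \<open>S\<close>,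
  and in the perceptive model it observes no collision exactly when all agents move the same
  way.  Each round thus hands all agents the same flag, which depends only on how many agents
  were selected to move.

  Leaders are elected by eliminating IDs bit by bit.  In the lazy model, the perceptive model and
  the basic model with \<open>n\<close> odd, the candidates whose current bit is set move, and the flag says
  whether they were none or all of the agents; otherwise the candidates with bit \<open>0\<close> drop out.
  In the basic model with \<open>n\<close> even the flag only says whether none, half or all of the agents
  went left, so every bit gets a phase of \<open>log N + 1\<close> rounds in which further bits of the same
  candidates rule out an exact half.\<close>


section \<open>Lifted trajectories\<close>

lemma gcount_eq_sum_floor:
  "gcount n p v t y = (\<Sum>j<n. \<lfloor>y - p j - v j * t\<rfloor> + 1)"
proof -
  define f where "f j = \<lfloor>y - p j - v j * t\<rfloor>" for j
  have nonneg: "{(j,k). j < n \<and> k \<ge> 0 \<and> ghost p v j k t \<le> y} = (SIGMA j:{..<n}. {0..f j})"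
    by (auto simp: f_def ghost_def le_floor_iff algebra_simps)
  have neg: "{(j,k). j < n \<and> k < 0 \<and> ghost p v j k t > y} = (SIGMA j:{..<n}. {f j + 1..-1})"
    by (auto simp: f_def ghost_def floor_less_iff algebra_simps
        zle_add1_eq_le[symmetric] simp del: zle_add1_eq_le)
  have "gcount n p v t y = int (\<Sum>j<n. nat (f j + 1)) - int (\<Sum>j<n. nat (- f j - 1))"
    unfolding gcount_def nonneg neg
    by (subst (1 2) card_SigmaI) (auto intro!: arg_cong2[where f = "(-)"] sum.cong simp: algebra_simps)
  also have "\<dots> = (\<Sum>j<n. f j + 1)"
    by (simp only: of_nat_sum sum_subtractf[symmetric]) (intro sum.cong; simp)
  finally show ?thesis unfolding f_def .
qed

lemma traj_eqI:
  assumes "m + 1 \<le> gcount n p v t y" "(\<Sum>j<n. \<lceil>y - p j - v j * t\<rceil>) \<le> m"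
  shows "traj n p v m t = y"
  unfolding traj_def
proof (rule cInf_eq_minimum)
  show "y \<in> {y. m + 1 \<le> gcount n p v t y}" using assms(1) by simp
  fix z assume z: "z \<in> {y. m + 1 \<le> gcount n p v t y}"
  show "y \<le> z"
  proof (rule ccontr)
    assume "\<not> y \<le> z"
    then have "\<lfloor>z - p j - v j * t\<rfloor> + 1 \<le> \<lceil>y - p j - v j * t\<rceil>" for j
      by (smt (verit) ceiling_correct floor_less_iff of_int_floor_le)
    then have "gcount n p v t z \<le> (\<Sum>j<n. \<lceil>y - p j - v j * t\<rceil>)"
      unfolding gcount_eq_sum_floor by (rule sum_mono)
    with assms(2) z show False by simp
  qed
qed

definition valid_positions :: "nat \<Rightarrow> (nat \<Rightarrow> real) \<Rightarrow> bool" where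
  "valid_positions n p \<longleftrightarrow> inj_on p {..<n} \<and> (\<forall>i<n. 0 \<le> p i \<and> p i < 1)"

lemma valid_positionsD:
  assumes "valid_positions n p"
  shows "i < n \<Longrightarrow> 0 \<le> p i" "i < n \<Longrightarrow> p i < 1"
    and "i < n \<Longrightarrow> j < n \<Longrightarrow> p i = p j \<longleftrightarrow> i = j"
  using assms unfolding valid_positions_def inj_on_def by auto

lemma rank_less: "i < n \<Longrightarrow> rank n p i < n"
proof -
  assume "i < n"
  then have "{j. j < n \<and> p j < p i} \<subseteq> {..<n} - {i}" by auto
  then have "rank n p i \<le> card ({..<n} - {i})" unfolding rank_def by (intro card_mono) auto
  with \<open>i < n\<close> show ?thesis by simp
qed

lemma rank_less_rank:
  assumes "i < n" "p i < p j"
  shows "rank n p i < rank n p j"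
proof -
  have "{l. l < n \<and> p l < p i} \<subseteq> {l. l < n \<and> p l < p j}" using assms(2) by force
  moreover have "i \<in> {l. l < n \<and> p l < p j} - {l. l < n \<and> p l < p i}" using assms by simp
  ultimately have "{l. l < n \<and> p l < p i} \<subset> {l. l < n \<and> p l < p j}" by blast
  then show ?thesis unfolding rank_def by (intro psubset_card_mono) simp_all
qed

lemma inj_on_rank:
  assumes "valid_positions n p"
  shows "inj_on (rank n p) {..<n}"
proof (rule inj_onI)
  fix i j assume "i \<in> {..<n}" "j \<in> {..<n}" "rank n p i = rank n p j"
  with rank_less_rank[of i n p j] rank_less_rank[of j n p i] have "p i = p j"
    by (metis lessThan_iff linorder_neqE less_irrefl)
  with \<open>i \<in> {..<n}\<close> \<open>j \<in> {..<n}\<close> show "i = j" using valid_positionsD(3)[OF assms] by simp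
qed

lemma rank_image:
  assumes "valid_positions n p"
  shows "rank n p ` {..<n} = {..<n}"
proof (rule card_subset_eq)
  show "rank n p ` {..<n} \<subseteq> {..<n}" using rank_less by blast
  show "card (rank n p ` {..<n}) = card {..<n}" using card_image[OF inj_on_rank[OF assms]] .
qed simp

lemma obtain_rank_eq_mod:
  assumes "valid_positions n p" "0 < n"
  obtains j where "j < n" "int (rank n p j) = m mod int n"
proof -
  have "nat (m mod int n) \<in> rank n p ` {..<n}"
    unfolding rank_image[OF assms(1)] using assms(2) by (simp add: nat_less_iff)
  then obtain j where "j < n" "rank n p j = nat (m mod int n)" by auto
  with assms(2) that show ?thesis by simp
qed

lemma floor_ceiling_diff_unit:
  fixes a b :: real
  assumes "0 \<le> a" "a < 1" "0 \<le> b" "b < 1"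
  shows "\<lfloor>a - b\<rfloor> + 1 = of_bool (b \<le> a)" "\<lceil>a - b\<rceil> = of_bool (b < a)"
proof -
  have "\<lfloor>a - b\<rfloor> = (if b \<le> a then 0 else -1)" "\<lceil>a - b\<rceil> = (if b < a then 1 else 0)"
    using assms by (simp_all add: floor_eq_iff ceiling_eq_iff)
  then show "\<lfloor>a - b\<rfloor> + 1 = of_bool (b \<le> a)" "\<lceil>a - b\<rceil> = of_bool (b < a)" by simp_all
qed

lemma sum_floor_ceiling_rank:
  assumes p: "valid_positions n p" and i: "i < n"
  shows "(\<Sum>l<n. \<lfloor>p i - p l\<rfloor> + 1) = int (rank n p i) + 1"
    and "(\<Sum>l<n. \<lceil>p i - p l\<rceil>) = int (rank n p i)"
proof -
  note unit = floor_ceiling_diff_unit[OF valid_positionsD(1,2)[OF p i] valid_positionsD(1,2)[OF p]]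
  have "(\<Sum>l<n. \<lfloor>p i - p l\<rfloor> + 1) = (\<Sum>l<n. of_bool (p l \<le> p i))"
    by (rule sum.cong) (simp_all add: unit)
  also have "\<dots> = int (card ({..<n} \<inter> {l. p l \<le> p i}))" by simp
  also have "{..<n} \<inter> {l. p l \<le> p i} = insert i {l. l < n \<and> p l < p i}"
    using i valid_positionsD(3)[OF p] by (auto simp: order_le_less)
  finally show "(\<Sum>l<n. \<lfloor>p i - p l\<rfloor> + 1) = int (rank n p i) + 1"
    by (simp add: rank_def)
  have "(\<Sum>l<n. \<lceil>p i - p l\<rceil>) = (\<Sum>l<n. of_bool (p l < p i))"
    by (rule sum.cong) (simp_all add: unit)
  also have "\<dots> = int (card ({..<n} \<inter> {l. p l < p i}))" by simp
  also have "{..<n} \<inter> {l. p l < p i} = {l. l < n \<and> p l < p i}" by auto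
  finally show "(\<Sum>l<n. \<lceil>p i - p l\<rceil>) = int (rank n p i)"
    by (simp add: rank_def)
qed

lemma traj_uniform:
  assumes p: "valid_positions n p" and j: "j < n" and v: "\<forall>l<n. v l = w"
  shows "traj n p v (int (rank n p j) + int n * c) t = p j + of_int c + w * t"
proof (rule traj_eqI)
  have shift: "p j + of_int c + w * t - p l - v l * t = (p j - p l) + of_int c" if "l < n" for l
    using v that by simp
  have "gcount n p v t (p j + of_int c + w * t) = (\<Sum>l<n. (\<lfloor>p j - p l\<rfloor> + 1) + c)"
    unfolding gcount_eq_sum_floor
    by (rule sum.cong) (simp_all only: shift floor_add_int lessThan_iff, simp)
  also have "\<dots> = (\<Sum>l<n. \<lfloor>p j - p l\<rfloor> + 1) + int n * c"
    by (simp only: sum.distrib[of "\<lambda>l. \<lfloor>p j - p l\<rfloor> + 1" "\<lambda>_. c"]) simp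
  also have "\<dots> = int (rank n p j) + 1 + int n * c"
    by (simp only: sum_floor_ceiling_rank[OF p j])
  finally show "int (rank n p j) + int n * c + 1 \<le> gcount n p v t (p j + of_int c + w * t)"
    by simp
  have "(\<Sum>l<n. \<lceil>p j + of_int c + w * t - p l - v l * t\<rceil>) = (\<Sum>l<n. \<lceil>p j - p l\<rceil> + c)"
    by (rule sum.cong) (simp_all only: shift ceiling_add_of_int lessThan_iff)
  also have "\<dots> = int (rank n p j) + int n * c"
    by (simp only: sum.distrib sum_floor_ceiling_rank[OF p j]) simp
  finally show "(\<Sum>l<n. \<lceil>p j + of_int c + w * t - p l - v l * t\<rceil>)
      \<le> int (rank n p j) + int n * c" by simp
qed

lemma traj_at_0: "traj n p v m 0 = traj n p v' m 0"
  unfolding traj_def gcount_eq_sum_floor by simp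

lemma traj_at_1:
  assumes "\<forall>j<n. v j = of_int (w j)"
  shows "traj n p v m 1 = traj n p v (m + (\<Sum>j<n. w j)) 0"
proof -
  have "gcount n p v 1 y = gcount n p v 0 y - (\<Sum>j<n. w j)" for y
  proof -
    have "\<lfloor>y - p j - v j * 1\<rfloor> + 1 = \<lfloor>y - p j - v j * 0\<rfloor> + 1 - w j" if "j < n" for j
      using assms that floor_add_int[of "y - p j" "- w j"] by simp
    then have "gcount n p v 1 y = (\<Sum>j<n. (\<lfloor>y - p j - v j * 0\<rfloor> + 1) - w j)"
      unfolding gcount_eq_sum_floor by (intro sum.cong) simp_all
    then show ?thesis unfolding gcount_eq_sum_floor by (simp only: sum_subtractf)
  qed
  then show ?thesis unfolding traj_def by (intro arg_cong[where f = Inf]) auto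
qed

lemma atraj_at_1:
  assumes p: "valid_positions n p" and i: "i < n" and v: "\<forall>j<n. v j = of_int (w j)"
  defines "m \<equiv> int (rank n p i) + (\<Sum>j<n. w j)"
  obtains j where "j < n" "int (rank n p j) = m mod int n"
    "atraj n p v i 1 = p j + of_int (m div int n)"
proof -
  obtain j where j: "j < n" "int (rank n p j) = m mod int n"
    using obtain_rank_eq_mod[OF p] i by (metis gr_zeroI not_less0)
  have "atraj n p v i 1 = traj n p (\<lambda>_. 0) (int (rank n p j) + int n * (m div int n)) 0"
    unfolding atraj_def traj_at_1[OF v] traj_at_0[where v = v and v' = "\<lambda>_. 0"] m_def[symmetric] j(2)
    by simp
  also have "\<dots> = p j + of_int (m div int n)"
    using traj_uniform[OF p j(1), of "\<lambda>_. 0" 0] by simp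
  finally show ?thesis using that j by blast
qed

lemma valid_positions_diff_eq_of_int:
  assumes p: "valid_positions n p" and "i < n" "j < n" "p i - p j = of_int k"
  shows "i = j" "k = 0"
proof -
  have "real_of_int (-1) < of_int k" "real_of_int k < of_int 1"
    using assms valid_positionsD(1,2)[OF p] by (smt (verit) of_int_minus of_int_1)+
  then show "k = 0" by (simp only: of_int_less_iff)
  with assms show "i = j" using valid_positionsD(3)[OF p] by simp
qed

lemma frac_atraj_at_1:
  assumes p: "valid_positions n p" and i: "i < n" and v: "\<forall>j<n. v j = of_int (w j)"
  obtains j where "j < n" "int (rank n p j) = (int (rank n p i) + (\<Sum>j<n. w j)) mod int n"
    "frac (atraj n p v i 1) = p j"
    "frac (atraj n p v i 1 - p i) = frac (p j - p i)"
proof -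
  obtain j where j: "j < n" "int (rank n p j) = (int (rank n p i) + (\<Sum>j<n. w j)) mod int n"
    "atraj n p v i 1 = p j + of_int ((int (rank n p i) + (\<Sum>j<n. w j)) div int n)"
    by (rule atraj_at_1[OF p i v])
  have "frac (atraj n p v i 1) = p j"
    unfolding j(3) using valid_positionsD(1,2)[OF p j(1)] by (simp add: frac_eq)
  moreover have "atraj n p v i 1 - p i
      = (p j - p i) + of_int ((int (rank n p i) + (\<Sum>j<n. w j)) div int n)"
    unfolding j(3) by simp
  then have "frac (atraj n p v i 1 - p i) = frac (p j - p i)"
    by (simp only: frac_add_of_int_right)
  ultimately show ?thesis using that j(1,2) by blast
qed

lemma frac_displacement_eq_0_iff:
  assumes p: "valid_positions n p" and i: "i < n" and v: "\<forall>j<n. v j = of_int (w j)"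
  shows "frac (atraj n p v i 1 - p i) = 0 \<longleftrightarrow> int n dvd (\<Sum>j<n. w j)"
proof -
  obtain j where j: "j < n" "int (rank n p j) = (int (rank n p i) + (\<Sum>j<n. w j)) mod int n"
    "frac (atraj n p v i 1 - p i) = frac (p j - p i)"
    by (rule frac_atraj_at_1[OF p i v])
  have "frac (p j - p i) = 0 \<longleftrightarrow> j = i"
    using valid_positions_diff_eq_of_int[OF p j(1) i] by (auto simp: frac_eq_0_iff elim: Ints_cases)
  also have "\<dots> \<longleftrightarrow> rank n p j = rank n p i"
    using inj_on_rank[OF p] j(1) i by (auto dest: inj_onD)
  also have "\<dots> \<longleftrightarrow> (int (rank n p i) + (\<Sum>j<n. w j)) mod int n = int (rank n p i) mod int n"
    using rank_less[OF i, of p] unfolding j(2)[symmetric] by simp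
  also have "\<dots> \<longleftrightarrow> int n dvd (\<Sum>j<n. w j)"
    by (simp add: mod_eq_dvd_iff)
  finally show ?thesis using j(3) by simp
qed

lemma valid_positions_after_round:
  assumes p: "valid_positions n p" and v: "\<forall>j<n. v j = of_int (w j)"
  shows "valid_positions n (\<lambda>i. frac (atraj n p v i 1))"
  unfolding valid_positions_def
proof (intro conjI allI impI inj_onI)
  fix a b assume a: "a \<in> {..<n}" and b: "b \<in> {..<n}"
    and eq: "frac (atraj n p v a 1) = frac (atraj n p v b 1)"
  define S where "S = (\<Sum>j<n. w j)"
  obtain ja where ja: "ja < n" "int (rank n p ja) = (int (rank n p a) + S) mod int n"
      "frac (atraj n p v a 1) = p ja"
    using frac_atraj_at_1[OF p _ v, of a] a unfolding S_def by auto
  obtain jb where jb: "jb < n" "int (rank n p jb) = (int (rank n p b) + S) mod int n"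
      "frac (atraj n p v b 1) = p jb"
    using frac_atraj_at_1[OF p _ v, of b] b unfolding S_def by auto
  have "ja = jb" using eq ja jb valid_positionsD(3)[OF p] by simp
  then have "(int (rank n p a) + S) mod int n = (int (rank n p b) + S) mod int n"
    using ja jb by simp
  then have "int (rank n p a) mod int n = int (rank n p b) mod int n"
    by (simp add: mod_eq_dvd_iff)
  then have "rank n p a = rank n p b" using rank_less[of a n p] rank_less[of b n p] a b by simp
  then show "a = b" using inj_on_rank[OF p] a b by (auto dest: inj_onD)
qed (simp_all add: frac_lt_1)

section \<open>Collisions\<close>

lemma coll_timesI:
  assumes "0 < t" "t \<le> 1" "m + 2 \<le> gcount n p v t y" "(\<Sum>j<n. \<lceil>y - p j - v j * t\<rceil>) \<le> m"
    and "m = int (rank n p i) \<or> m + 1 = int (rank n p i)"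
  shows "t \<in> coll_times n p v i"
proof -
  have traj: "traj n p v m t = y" "traj n p v (m + 1) t = y"
    by (rule traj_eqI; use assms(3,4) in simp)+
  have "traj n p v (int (rank n p i) - 1) t = atraj n p v i t
      \<or> traj n p v (int (rank n p i) + 1) t = atraj n p v i t"
  proof (cases "m = int (rank n p i)")
    case True
    with traj show ?thesis by (simp add: atraj_def)
  next
    case False
    with assms(5) have "m = int (rank n p i) - 1" by simp
    with traj show ?thesis by (simp add: atraj_def)
  qed
  then show ?thesis using assms(1,2) unfolding coll_times_def by simp
qed

lemma coll_times_uniform:
  assumes p: "valid_positions n p" and i: "i < n" and v: "\<forall>l<n. v l = w"
  shows "coll_times n p v i = {}"
proof -
  have traj_i: "traj n p v (int (rank n p i)) t = p i + w * t" for t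
    using traj_uniform[OF p i v, of 0] by simp
  have "m = int (rank n p i)" if "traj n p v m t = p i + w * t" for m t
  proof -
    obtain j where j: "j < n" "int (rank n p j) = m mod int n"
      using obtain_rank_eq_mod[OF p] i by (metis gr_zeroI not_less0)
    then have "traj n p v m t = p j + of_int (m div int n) + w * t"
      using traj_uniform[OF p j(1) v, of "m div int n" t] by simp
    with that have "p j - p i = of_int (- (m div int n))" by simp
    then have "j = i" "- (m div int n) = 0" by (rule valid_positions_diff_eq_of_int[OF p j(1) i])+
    have "m = int n * (m div int n) + m mod int n" by simp
    with j(2) \<open>j = i\<close> \<open>- (m div int n) = 0\<close> show ?thesis by simp
  qed
  then have "traj n p v (int (rank n p i) - 1) t \<noteq> atraj n p v i t"
    "traj n p v (int (rank n p i) + 1) t \<noteq> atraj n p v i t" for t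
    unfolding atraj_def traj_i by fastforce+
  then show ?thesis unfolding coll_times_def by simp
qed

lemma floor_less_diff_less_ceiling:
  assumes p: "valid_positions n p" and "i < n" "l < n" "l \<noteq> i"
  shows "of_int \<lfloor>p i - p l\<rfloor> < p i - p l" "p i - p l < of_int \<lceil>p i - p l\<rceil>"
    and "\<lceil>p i - p l\<rceil> = \<lfloor>p i - p l\<rfloor> + 1"
proof -
  have nonint: "p i - p l \<noteq> of_int k" for k
    using valid_positions_diff_eq_of_int[OF p assms(2,3)] assms(4) by metis
  show "of_int \<lfloor>p i - p l\<rfloor> < p i - p l"
    using nonint[of "\<lfloor>p i - p l\<rfloor>"] of_int_floor_le[of "p i - p l"] by linarith
  show "p i - p l < of_int \<lceil>p i - p l\<rceil>"
    using nonint[of "\<lceil>p i - p l\<rceil>"] le_of_int_ceiling[of "p i - p l"] by linarith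
  show "\<lceil>p i - p l\<rceil> = \<lfloor>p i - p l\<rfloor> + 1"
    using nonint[of "\<lfloor>p i - p l\<rfloor>"] by (simp add: ceiling_altdef)
qed

lemma ceiling_eq_if_between:
  fixes a x :: real
  assumes "a \<le> x" "x \<le> of_int \<lceil>a\<rceil>"
  shows "\<lceil>x\<rceil> = \<lceil>a\<rceil>"
  using ceiling_mono[OF assms(1)] ceiling_le[OF assms(2)] by simp

lemma floor_eq_if_between:
  fixes a x :: real
  assumes "of_int \<lfloor>a\<rfloor> \<le> x" "x \<le> a"
  shows "\<lfloor>x\<rfloor> = \<lfloor>a\<rfloor>"
  using floor_mono[OF assms(2)] le_floor_iff[THEN iffD2, OF assms(1)] by simp

lemma obtain_half_min_gap:
  fixes g :: "'a \<Rightarrow> real"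
  assumes "finite J" "J \<noteq> {}" "\<And>l. l \<in> J \<Longrightarrow> 0 < g l" "\<And>l. l \<in> J \<Longrightarrow> g l < 1"
  obtains t js where "js \<in> J" "2 * t = g js" "\<And>l. l \<in> J \<Longrightarrow> 2 * t \<le> g l" "0 < t" "t < 1"
proof -
  obtain js where js: "js \<in> J" "\<And>l. l \<in> J \<Longrightarrow> g js \<le> g l"
    using ex_is_arg_min_if_finite[OF assms(1,2), of g] unfolding is_arg_min_linorder by blast
  show ?thesis by (rule that[of js "g js / 2"]) (use js assms(3,4)[OF js(1)] in auto)
qed

text \<open>A right mover meets the nearest ghost coming towards it from the right after half the
  gap between them; at that time its lifted index and the next one sit at the same point.\<close>

lemma coll_times_right_mover:
  assumes p: "valid_positions n p" and i: "i < n" and vi: "v i = 1"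
    and v: "\<forall>l<n. v l = 1 \<or> v l = -1" and opp: "\<exists>l<n. v l = -1"
  shows "coll_times n p v i \<noteq> {}"
proof -
  define a where "a l = p i - p l" for l
  define J where "J = {l. l < n \<and> v l = -1}"
  have J: "l < n" "l \<noteq> i" "v l = -1" if "l \<in> J" for l using that vi unfolding J_def by auto
  note frac = floor_less_diff_less_ceiling[OF p i, folded a_def]
  obtain t js where js: "js \<in> J" "2 * t = \<lceil>a js\<rceil> - a js"
    and least: "\<And>l. l \<in> J \<Longrightarrow> 2 * t \<le> \<lceil>a l\<rceil> - a l" and t: "0 < t" "t < 1"
  proof (rule obtain_half_min_gap)
    show "finite J" "J \<noteq> {}" using opp unfolding J_def by auto
    show "0 < \<lceil>a l\<rceil> - a l" "\<lceil>a l\<rceil> - a l < 1" if "l \<in> J" for l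
      using frac(2)[OF J(1,2)[OF that]] ceiling_correct[of "a l"] by linarith+
  qed blast
  define x where "x l = p i + t - p l - v l * t" for l
  have x: "a l \<le> x l" "x l \<le> of_int \<lceil>a l\<rceil>" if "l < n" for l
  proof -
    have "x l = a l \<or> (l \<in> J \<and> x l = a l + 2 * t)"
      using v that unfolding x_def a_def J_def by auto
    then show "a l \<le> x l" "x l \<le> of_int \<lceil>a l\<rceil>"
      using least t le_of_int_ceiling[of "a l"] by force+
  qed
  have "x js = of_int \<lceil>a js\<rceil>" using js J(3)[OF js(1)] unfolding x_def a_def by simp
  then have "\<lfloor>a js\<rfloor> + 1 < \<lfloor>x js\<rfloor> + 1" using frac(3)[OF J(1,2)[OF js(1)]] by simp
  then have "(\<Sum>l<n. \<lfloor>a l\<rfloor> + 1) < (\<Sum>l<n. \<lfloor>x l\<rfloor> + 1)"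
    using x J(1)[OF js(1)] by (intro sum_strict_mono_ex1) (auto intro!: floor_mono)
  then have "int (rank n p i) + 2 \<le> gcount n p v t (p i + t)"
    using sum_floor_ceiling_rank(1)[OF p i] unfolding gcount_eq_sum_floor a_def x_def by simp
  moreover have "(\<Sum>l<n. \<lceil>x l\<rceil>) = (\<Sum>l<n. \<lceil>a l\<rceil>)"
    using x by (intro sum.cong) (simp_all add: ceiling_eq_if_between)
  then have "(\<Sum>l<n. \<lceil>p i + t - p l - v l * t\<rceil>) \<le> int (rank n p i)"
    using sum_floor_ceiling_rank(2)[OF p i] unfolding x_def a_def by simp
  ultimately have "t \<in> coll_times n p v i"
    using t by (intro coll_timesI[where m = "int (rank n p i)"]) simp_all
  then show ?thesis by blast
qed

lemma coll_times_left_mover: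
  assumes p: "valid_positions n p" and i: "i < n" and vi: "v i = -1"
    and v: "\<forall>l<n. v l = 1 \<or> v l = -1" and opp: "\<exists>l<n. v l = 1"
  shows "coll_times n p v i \<noteq> {}"
proof -
  define a where "a l = p i - p l" for l
  define J where "J = {l. l < n \<and> v l = 1}"
  have J: "l < n" "l \<noteq> i" "v l = 1" if "l \<in> J" for l using that vi unfolding J_def by auto
  note frac = floor_less_diff_less_ceiling[OF p i, folded a_def]
  obtain t js where js: "js \<in> J" "2 * t = a js - \<lfloor>a js\<rfloor>"
    and least: "\<And>l. l \<in> J \<Longrightarrow> 2 * t \<le> a l - \<lfloor>a l\<rfloor>" and t: "0 < t" "t < 1"
  proof (rule obtain_half_min_gap)
    show "finite J" "J \<noteq> {}" using opp unfolding J_def by auto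
    show "0 < a l - \<lfloor>a l\<rfloor>" "a l - \<lfloor>a l\<rfloor> < 1" if "l \<in> J" for l
      using frac(1)[OF J(1,2)[OF that]] floor_correct[of "a l"] by linarith+
  qed blast
  define x where "x l = p i - t - p l - v l * t" for l
  have x: "of_int \<lfloor>a l\<rfloor> \<le> x l" "x l \<le> a l" if "l < n" for l
  proof -
    have "x l = a l \<or> (l \<in> J \<and> x l = a l - 2 * t)"
      using v that unfolding x_def a_def J_def by auto
    then show "of_int \<lfloor>a l\<rfloor> \<le> x l" "x l \<le> a l"
      using least t of_int_floor_le[of "a l"] by force+
  qed
  have "x js = of_int \<lfloor>a js\<rfloor>" using js J(3)[OF js(1)] unfolding x_def a_def by simp
  then have "\<lceil>x js\<rceil> < \<lceil>a js\<rceil>" using frac(3)[OF J(1,2)[OF js(1)]] by simp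
  then have "(\<Sum>l<n. \<lceil>x l\<rceil>) < (\<Sum>l<n. \<lceil>a l\<rceil>)"
    using x J(1)[OF js(1)] by (intro sum_strict_mono_ex1) (auto intro!: ceiling_mono)
  then have "(\<Sum>l<n. \<lceil>x l\<rceil>) \<le> int (rank n p i) - 1"
    using sum_floor_ceiling_rank(2)[OF p i] unfolding a_def by simp
  moreover have "(\<Sum>l<n. \<lfloor>x l\<rfloor> + 1) = (\<Sum>l<n. \<lfloor>a l\<rfloor> + 1)"
    using x by (intro sum.cong) (simp_all add: floor_eq_if_between)
  then have "int (rank n p i) - 1 + 2 \<le> gcount n p v t (p i - t)"
    using sum_floor_ceiling_rank(1)[OF p i] unfolding gcount_eq_sum_floor x_def a_def by simp
  ultimately have "t \<in> coll_times n p v i"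
    using t unfolding x_def
    by (intro coll_timesI[where m = "int (rank n p i) - 1" and y = "p i - t"]) simp_all
  then show ?thesis by blast
qed

lemma coll_times_opposite:
  assumes "valid_positions n p" "i < n" "\<forall>l<n. v l = 1 \<or> v l = -1" "\<exists>l<n. v l \<noteq> v i"
  shows "coll_times n p v i \<noteq> {}"
proof -
  from assms(3,4) have opp: "\<exists>l<n. v l = - v i" by (metis assms(2) minus_equation_iff)
  from assms(2,3) consider "v i = 1" | "v i = -1" by blast
  then show ?thesis
  proof cases
    case 1
    with opp show ?thesis using coll_times_right_mover[OF assms(1,2) _ assms(3)] by simp
  next
    case 2
    with opp show ?thesis using coll_times_left_mover[OF assms(1,2) _ assms(3)] by simp
  qed
qed

section \<open>Observations as flags\<close>

definition dir_int :: "dir \<Rightarrow> int" where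
  "dir_int d = (case d of Right \<Rightarrow> 1 | Left \<Rightarrow> -1 | Idle \<Rightarrow> 0)"

lemma dir_int_simps [simp]: "dir_int Right = 1" "dir_int Left = -1" "dir_int Idle = 0"
  by (simp_all add: dir_int_def)

lemma vel_eq_dir_int: "vel d = of_int (dir_int d)"
  by (cases d) (simp_all add: vel_def dir_int_def)

abbreviation observation :: "model \<Rightarrow> nat \<Rightarrow> (nat \<Rightarrow> real) \<Rightarrow> (nat \<Rightarrow> real) \<Rightarrow> nat \<Rightarrow> obs" where
  "observation m n p v i \<equiv>
     (frac (atraj n p v i 1 - p i), if m = Perceptive then first_coll n p v i else None)"

lemma frac_displacement_eq_0_iff_dir:
  assumes "valid_positions n p" "i < n" "\<forall>j<n. v j = vel (d j)"
  shows "frac (atraj n p v i 1 - p i) = 0 \<longleftrightarrow> int n dvd (\<Sum>j<n. dir_int (d j))"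
  using assms by (intro frac_displacement_eq_0_iff) (simp_all add: vel_eq_dir_int)

lemma sum_dir_int_if:
  "(\<Sum>j<n. dir_int (if P j then d1 else d2))
     = int (card {j. j < n \<and> P j}) * dir_int d1 + (int n - int (card {j. j < n \<and> P j})) * dir_int d2"
proof -
  have "(\<Sum>j<n. dir_int (if P j then d1 else d2))
      = (\<Sum>j<n. of_bool (P j) * (dir_int d1 - dir_int d2) + dir_int d2)"
    by (intro sum.cong) auto
  also have "\<dots> = int (card ({..<n} \<inter> {j. P j})) * (dir_int d1 - dir_int d2) + int n * dir_int d2"
    by (simp add: sum.distrib sum_distrib_right[symmetric])
  also have "{..<n} \<inter> {j. P j} = {j. j < n \<and> P j}" by auto
  finally show ?thesis by (simp add: algebra_simps)
qed

lemma first_coll_eq_None_iff: "first_coll n p v i = None \<longleftrightarrow> coll_times n p v i = {}"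
  by (simp add: first_coll_def)

lemma perceptive_flag_iff_uniform:
  assumes p: "valid_positions n p" and i: "i < n" and v: "\<forall>j<n. v j = vel (d j)"
    and d: "\<forall>j<n. d j \<noteq> Idle"
  shows "frac (atraj n p v i 1 - p i) = 0 \<and> first_coll n p v i = None \<longleftrightarrow> (\<forall>j<n. d j = d i)"
proof
  assume uniform: "\<forall>j<n. d j = d i"
  then have "coll_times n p v i = {}"
    using coll_times_uniform[OF p i, of v "vel (d i)"] v by simp
  moreover have "int n dvd (\<Sum>j<n. dir_int (d j))" using uniform by simp
  ultimately show "frac (atraj n p v i 1 - p i) = 0 \<and> first_coll n p v i = None"
    using frac_displacement_eq_0_iff_dir[OF p i v] first_coll_eq_None_iff by simp
next
  assume "frac (atraj n p v i 1 - p i) = 0 \<and> first_coll n p v i = None"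
  then have "coll_times n p v i = {}" by (simp add: first_coll_eq_None_iff)
  moreover have "\<forall>l<n. v l = 1 \<or> v l = -1" using v d by (auto simp: vel_def split: dir.split)
  moreover have "v j \<noteq> v i" if "j < n" "d j \<noteq> d i" for j
    using that i v d by (auto simp: vel_def split: dir.splits)
  ultimately show "\<forall>j<n. d j = d i" using coll_times_opposite[OF p i] by blast
qed

fun flag_seq :: "(bool list \<Rightarrow> bool) \<Rightarrow> nat \<Rightarrow> bool list" where
  "flag_seq \<Phi> 0 = []"
| "flag_seq \<Phi> (Suc r) = flag_seq \<Phi> r @ [\<Phi> (flag_seq \<Phi> r)]"

lemma length_flag_seq [simp]: "length (flag_seq \<Phi> r) = r"
  by (induction r) auto

lemma nth_flag_seq: "k < r \<Longrightarrow> flag_seq \<Phi> r ! k = \<Phi> (flag_seq \<Phi> k)"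
  by (induction r) (auto simp: nth_append less_Suc_eq)

lemma run_flag_seq:
  assumes A: "fst A = (\<lambda>x h. D x (map fl h))" and p0: "valid_positions n p0"
    and flag: "\<And>p v F i. valid_positions n p \<Longrightarrow> \<forall>j<n. v j = vel (D (ids j) F) \<Longrightarrow> i < n \<Longrightarrow>
        fl (observation m n p v i) = \<Phi> F"
  shows "valid_positions n (fst (run m n ids p0 A r))
    \<and> (\<forall>i<n. map fl (snd (run m n ids p0 A r) i) = flag_seq \<Phi> r)"
proof (induction r)
  case 0
  with p0 show ?case by (simp add: run_def)
next
  case (Suc r)
  obtain p h where ph: "run m n ids p0 A r = (p, h)" by fastforce
  with Suc have p: "valid_positions n p" and h: "\<forall>i<n. map fl (h i) = flag_seq \<Phi> r" by auto
  define v where "v = (\<lambda>i. vel (fst A (ids i) (h i)))"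
  have v: "\<forall>j<n. v j = vel (D (ids j) (flag_seq \<Phi> r))" using h unfolding v_def A by auto
  have "run m n ids p0 A (Suc r) = round_step m n ids A (p, h)" using ph by (simp add: run_def)
  also have "\<dots> = (\<lambda>i. frac (atraj n p v i 1), \<lambda>i. h i @ [observation m n p v i])"
    unfolding round_step_def Let_def v_def fst_conv snd_conv ..
  moreover have "valid_positions n (\<lambda>i. frac (atraj n p v i 1))"
    by (rule valid_positions_after_round[OF p, of v "\<lambda>j. dir_int (fst A (ids j) (h j))"])
      (simp add: v_def vel_eq_dir_int)
  moreover have "map fl (h i @ [observation m n p v i]) = flag_seq \<Phi> (Suc r)" if "i < n" for i
    using h flag[OF p v that] that by simp
  ultimately show ?case by simp
qed

section \<open>Elimination by ID bits\<close>

text \<open>A flag list is read in phases of \<open>K\<close> rounds, and an ID \<open>x \<ge> 1\<close> through the bits of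
  \<open>x - 1\<close>.\<close>

definition candidate :: "nat \<Rightarrow> nat \<Rightarrow> bool list \<Rightarrow> bool" where
  "candidate K x F \<longleftrightarrow> (\<forall>b < length F div K. (\<exists>u<K. \<not> F ! (b * K + u)) \<longrightarrow> bit (x - 1) b)"

definition selected :: "nat \<Rightarrow> nat \<Rightarrow> bool list \<Rightarrow> bool" where
  "selected K x F \<longleftrightarrow> candidate K x F \<and> bit (x - 1) (length F div K)
     \<and> (length F mod K = 0 \<or> bit (x - 1) (length F mod K - 1))"

definition selection_flag :: "nat \<Rightarrow> (nat \<Rightarrow> nat \<Rightarrow> bool) \<Rightarrow> (nat \<Rightarrow> nat) \<Rightarrow> nat \<Rightarrow> bool list \<Rightarrow> bool"
  where "selection_flag K ok ids n F = ok n (card {j. j < n \<and> selected K (ids j) F})"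

definition elimination_algo :: "nat \<Rightarrow> (obs \<Rightarrow> bool) \<Rightarrow> dir \<Rightarrow> dir \<Rightarrow> algo" where
  "elimination_algo K fl d1 d2 =
     ((\<lambda>x h. if selected K x (map fl h) then d1 else d2), (\<lambda>x h. candidate K x (map fl h)))"

context
  fixes K :: nat and ok :: "nat \<Rightarrow> nat \<Rightarrow> bool" and ids :: "nat \<Rightarrow> nat" and n :: nat
begin

abbreviation flags :: "nat \<Rightarrow> bool list" where
  "flags \<equiv> flag_seq (selection_flag K ok ids n)"

definition phase_split :: "nat \<Rightarrow> bool" where
  "phase_split b \<longleftrightarrow> (\<exists>u<K. \<not> selection_flag K ok ids n (flags (b * K + u)))"

definition survivor :: "nat \<Rightarrow> nat \<Rightarrow> bool" where
  "survivor b x \<longleftrightarrow> (\<forall>b'<b. phase_split b' \<longrightarrow> bit (x - 1) b')"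

lemma survivor_Suc: "survivor (Suc b) x \<longleftrightarrow> survivor b x \<and> (phase_split b \<longrightarrow> bit (x - 1) b)"
  unfolding survivor_def by (auto simp: less_Suc_eq)

lemma candidate_flags: "candidate K x (flags r) \<longleftrightarrow> survivor (r div K) x"
proof -
  have "(\<exists>u<K. \<not> flags r ! (b * K + u)) \<longleftrightarrow> phase_split b" if "b < r div K" for b
  proof -
    have "b * K + u < r" if "u < K" for u
      using \<open>b < r div K\<close> that div_less_iff_less_mult[of K r "Suc b"] by auto
    then show ?thesis unfolding phase_split_def by (auto simp: nth_flag_seq)
  qed
  then show ?thesis unfolding candidate_def survivor_def by auto
qed

lemma selection_flag_flags:
  assumes "u < K"
  shows "selection_flag K ok ids n (flags (b * K + u)) = ok n (card {j. j < n \<and> survivor b (ids j)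
      \<and> bit (ids j - 1) b \<and> (u = 0 \<or> bit (ids j - 1) (u - 1))})"
proof -
  have "(b * K + u) div K = b" "(b * K + u) mod K = u" using assms by auto
  then have "selected K x (flags (b * K + u))
      \<longleftrightarrow> survivor b x \<and> bit (x - 1) b \<and> (u = 0 \<or> bit (x - 1) (u - 1))" for x
    unfolding selected_def candidate_flags by simp
  then show ?thesis by (simp add: selection_flag_def[of K ok ids n "flags (b * K + u)"])
qed

lemma phase_split_imp_survivor_bit:
  assumes "ok n 0" "phase_split b"
  shows "\<exists>j<n. survivor b (ids j) \<and> bit (ids j - 1) b"
proof (rule ccontr)
  assume "\<not> ?thesis"
  then have none: "{j. j < n \<and> survivor b (ids j) \<and> bit (ids j - 1) b
      \<and> (u = 0 \<or> bit (ids j - 1) (u - 1))} = {}" for u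
    by blast
  have "selection_flag K ok ids n (flags (b * K + u))" if "u < K" for u
    unfolding selection_flag_flags[OF that] none using assms(1) by simp
  with assms(2) show False unfolding phase_split_def by blast
qed

lemma survivors_agree:
  assumes "0 < n" "ok n 0"
    and unanimous: "\<And>b. \<not> phase_split b \<Longrightarrow>
      {j. j < n \<and> survivor b (ids j) \<and> bit (ids j - 1) b} \<in> {{}, {..<n}}"
  shows "(\<exists>j<n. survivor b (ids j))
    \<and> (\<forall>j<n. \<forall>j'<n. survivor b (ids j) \<longrightarrow> survivor b (ids j')
        \<longrightarrow> (\<forall>k<b. bit (ids j - 1) k = bit (ids j' - 1) k))"
proof (induction b)
  case 0
  with assms(1) show ?case by (auto simp: survivor_def)
next
  case (Suc b)
  show ?case
  proof (cases "phase_split b")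
    case True
    then have same: "survivor (Suc b) x \<longleftrightarrow> survivor b x \<and> bit (x - 1) b" for x
      by (simp add: survivor_Suc)
    have "bit (ids j - 1) b = bit (ids j' - 1) b"
      if "survivor (Suc b) (ids j)" "survivor (Suc b) (ids j')" for j j'
      using that unfolding same by simp
    moreover have "\<exists>j<n. survivor (Suc b) (ids j)"
      using phase_split_imp_survivor_bit[OF assms(2) True] unfolding same .
    ultimately show ?thesis using Suc.IH unfolding same by (metis less_Suc_eq)
  next
    case False
    then have same: "survivor (Suc b) x \<longleftrightarrow> survivor b x" for x by (simp add: survivor_Suc)
    have "bit (ids j - 1) b = bit (ids j' - 1) b"
      if "j < n" "j' < n" "survivor b (ids j)" "survivor b (ids j')" for j j'
      using unanimous[OF False] that by (auto simp: set_eq_iff)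
    with Suc.IH show ?thesis unfolding same by (metis less_Suc_eq)
  qed
qed

end

lemma id_bits_differ:
  fixes x y :: nat
  assumes "1 \<le> x" "x \<le> 2 ^ M" "1 \<le> y" "y \<le> 2 ^ M" "x \<noteq> y"
  shows "\<exists>k<M. bit (x - 1) k \<noteq> bit (y - 1) k"
proof (rule ccontr)
  assume "\<not> ?thesis"
  then have "take_bit M (x - 1) = take_bit M (y - 1)"
    by (auto intro!: bit_eqI simp: bit_take_bit_iff)
  moreover have "x - 1 < 2 ^ M" "y - 1 < 2 ^ M" using assms(1-4) by linarith+
  ultimately have "x - 1 = y - 1" by (simp add: take_bit_nat_eq_self)
  with assms(1,3,5) show False by linarith
qed

lemma ex1_if_bits_agree:
  fixes ids :: "nat \<Rightarrow> nat"
  assumes inj: "inj_on ids {..<n}" and range: "\<forall>i<n. 1 \<le> ids i \<and> ids i \<le> 2 ^ M"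
    and ex: "\<exists>j<n. C j"
    and agree: "\<forall>j<n. \<forall>j'<n. C j \<longrightarrow> C j' \<longrightarrow> (\<forall>k<M. bit (ids j - 1) k = bit (ids j' - 1) k)"
  shows "\<exists>!i. i < n \<and> C i"
proof -
  have "ids i = ids j" if "i < n" "j < n" "C i" "C j" for i j
    using id_bits_differ[of "ids i" M "ids j"] range agree that by auto
  with ex inj show ?thesis by (auto dest: inj_onD)
qed

lemma solves_elimination:
  assumes valid: "valid_algo m (elimination_algo K fl d1 d2)" and K: "0 < K" and N: "N \<le> 2 ^ M"
    and ok0: "\<And>n. ok n 0"
    and flag: "\<And>n ids p v F i. even n = par \<Longrightarrow> valid_positions n p \<Longrightarrow>
      \<forall>j<n. v j = vel (if selected K (ids j) F then d1 else d2) \<Longrightarrow> i < n \<Longrightarrow>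
      fl (observation m n p v i) = selection_flag K ok ids n F"
    and unanimous: "\<And>n ids b. 4 < n \<Longrightarrow> even n = par \<Longrightarrow> inj_on ids {..<n} \<Longrightarrow>
      \<forall>i<n. 1 \<le> ids i \<and> ids i \<le> 2 ^ M \<Longrightarrow> \<not> phase_split K ok ids n b \<Longrightarrow>
      {j. j < n \<and> survivor K ok ids n b (ids j) \<and> bit (ids j - 1) b} \<in> {{}, {..<n}}"
  shows "solves m N par (elimination_algo K fl d1 d2) (K * M)"
  unfolding solves_def
proof (intro conjI allI impI)
  fix n ids p
  assume inst: "valid_instance N n ids p \<and> even n = par"
  then have n: "4 < n" and inj: "inj_on ids {..<n}" and par: "even n = par"
    and ids: "\<forall>i<n. 1 \<le> ids i \<and> ids i \<le> N" and p: "valid_positions n p"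
    by (simp_all add: valid_instance_def valid_positions_def)
  from ids N have range: "\<forall>i<n. 1 \<le> ids i \<and> ids i \<le> 2 ^ M" using le_trans by blast
  let ?A = "elimination_algo K fl d1 d2"
  have "valid_positions n (fst (run m n ids p ?A (K * M)))
    \<and> (\<forall>i<n. map fl (snd (run m n ids p ?A (K * M)) i) = flags K ok ids n (K * M))"
  proof (rule run_flag_seq[where D = "\<lambda>x F. if selected K x F then d1 else d2"])
    show "fst ?A = (\<lambda>x h. if selected K x (map fl h) then d1 else d2)"
      by (simp add: elimination_algo_def)
  qed (use p flag[OF par] in blast)+
  then have history: "map fl (snd (run m n ids p ?A (K * M)) i) = flags K ok ids n (K * M)"
    if "i < n" for i using that by blast
  have leader: "snd ?A (ids i) (snd (run m n ids p ?A (K * M)) i) \<longleftrightarrow> survivor K ok ids n M (ids i)"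
    if "i < n" for i
  proof -
    have "snd ?A (ids i) (snd (run m n ids p ?A (K * M)) i)
        \<longleftrightarrow> candidate K (ids i) (flags K ok ids n (K * M))"
      using history[OF that] by (simp add: elimination_algo_def)
    also have "\<dots> \<longleftrightarrow> survivor K ok ids n (K * M div K) (ids i)" by (rule candidate_flags)
    finally show ?thesis using K by simp
  qed
  have "(\<exists>j<n. survivor K ok ids n M (ids j))
    \<and> (\<forall>j<n. \<forall>j'<n. survivor K ok ids n M (ids j) \<longrightarrow> survivor K ok ids n M (ids j')
        \<longrightarrow> (\<forall>k<M. bit (ids j - 1) k = bit (ids j' - 1) k))"
    by (rule survivors_agree) (use n ok0 unanimous[OF n par inj range] in auto)
  then have "\<exists>!i. i < n \<and> survivor K ok ids n M (ids i)"
    by (intro ex1_if_bits_agree[OF inj range]) blast+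
  moreover have "i < n \<and> snd ?A (ids i) (snd (run m n ids p ?A (K * M)) i)
      \<longleftrightarrow> i < n \<and> survivor K ok ids n M (ids i)" for i
    using leader by blast
  ultimately show "elects m n ids p ?A (K * M)" unfolding elects_def by presburger
qed (fact valid)

definition all_or_none :: "nat \<Rightarrow> nat \<Rightarrow> bool" where
  "all_or_none n c \<longleftrightarrow> c = 0 \<or> c = n"

lemma all_or_none_card_iff:
  assumes "B \<subseteq> {..<n}"
  shows "all_or_none n (card B) \<longleftrightarrow> B \<in> {{}, {..<n}}"
proof -
  have "finite B" using assms finite_subset by blast
  moreover have "card B = n \<longleftrightarrow> B = {..<n}"
    using assms by (metis card_lessThan card_subset_eq finite_lessThan)
  ultimately show ?thesis unfolding all_or_none_def by auto
qed

lemma int_dvd_card_iff: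
  assumes "0 < n" "c \<le> n"
  shows "int n dvd int c \<longleftrightarrow> all_or_none n c"
proof
  assume "int n dvd int c"
  then obtain k where k: "c = n * k" by (auto simp flip: of_nat_dvd_iff elim: dvdE)
  with assms have "k = 0 \<or> k = 1" by (cases k) auto
  with k show "all_or_none n c" by (auto simp: all_or_none_def)
qed (auto simp: all_or_none_def)

lemma unanimous_all_or_none:
  assumes "\<not> phase_split 1 all_or_none ids n b"
  shows "{j. j < n \<and> survivor 1 all_or_none ids n b (ids j) \<and> bit (ids j - 1) b} \<in> {{}, {..<n}}"
proof -
  have "selection_flag 1 all_or_none ids n (flags 1 all_or_none ids n (b * 1 + 0))"
    using assms unfolding phase_split_def by blast
  then have "all_or_none n (card {j. j < n \<and> survivor 1 all_or_none ids n b (ids j) \<and> bit (ids j - 1) b})"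
    unfolding selection_flag_flags[where u = 0 and K = 1, OF zero_less_one] by simp
  then show ?thesis by (subst (asm) all_or_none_card_iff) auto
qed

lemma lazy_flag:
  assumes "valid_positions n p" "i < n"
    and "\<forall>j<n. v j = vel (if selected 1 (ids j) F then Right else Idle)"
  shows "(fst (observation Lazy n p v i) = 0) = selection_flag 1 all_or_none ids n F"
proof -
  define c where "c = card {j. j < n \<and> selected 1 (ids j) F}"
  have "c \<le> n" unfolding c_def by (rule card_mono[of "{..<n}", simplified]) auto
  have "frac (atraj n p v i 1 - p i) = 0
      \<longleftrightarrow> int n dvd (\<Sum>j<n. dir_int (if selected 1 (ids j) F then Right else Idle))"
    by (rule frac_displacement_eq_0_iff_dir[OF assms])
  also have "(\<Sum>j<n. dir_int (if selected 1 (ids j) F then Right else Idle)) = int c"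
    by (simp add: sum_dir_int_if c_def)
  also have "int n dvd int c \<longleftrightarrow> all_or_none n c"
    using assms(2) \<open>c \<le> n\<close> by (intro int_dvd_card_iff) simp_all
  finally show ?thesis unfolding selection_flag_def c_def[symmetric] by simp
qed

lemma odd_flag:
  assumes "valid_positions n p" "i < n" "odd n"
    and "\<forall>j<n. v j = vel (if selected 1 (ids j) F then Right else Left)"
  shows "(fst (observation Basic n p v i) = 0) = selection_flag 1 all_or_none ids n F"
proof -
  define c where "c = card {j. j < n \<and> selected 1 (ids j) F}"
  have "c \<le> n" unfolding c_def by (rule card_mono[of "{..<n}", simplified]) auto
  have "frac (atraj n p v i 1 - p i) = 0
      \<longleftrightarrow> int n dvd (\<Sum>j<n. dir_int (if selected 1 (ids j) F then Right else Left))"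
    by (rule frac_displacement_eq_0_iff_dir[OF assms(1,2,4)])
  also have "(\<Sum>j<n. dir_int (if selected 1 (ids j) F then Right else Left)) = 2 * int c - int n"
    by (simp add: sum_dir_int_if c_def)
  also have "int n dvd 2 * int c - int n \<longleftrightarrow> int n dvd 2 * int c"
    by (rule dvd_diff_left_iff) simp
  also have "\<dots> \<longleftrightarrow> int n dvd int c"
    using \<open>odd n\<close> by (simp add: coprime_dvd_mult_right_iff)
  also have "\<dots> \<longleftrightarrow> all_or_none n c"
    using assms(2) \<open>c \<le> n\<close> by (intro int_dvd_card_iff) simp_all
  finally show ?thesis unfolding selection_flag_def c_def[symmetric] by simp
qed

lemma perceptive_flag:
  assumes p: "valid_positions n p" and i: "i < n"
    and v: "\<forall>j<n. v j = vel (if selected 1 (ids j) F then Right else Left)"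
  shows "(fst (observation Perceptive n p v i) = 0 \<and> snd (observation Perceptive n p v i) = None)
    = selection_flag 1 all_or_none ids n F"
proof -
  have "(\<forall>j<n. (if selected 1 (ids j) F then Right else Left)
        = (if selected 1 (ids i) F then Right else Left))
      \<longleftrightarrow> {j. j < n \<and> selected 1 (ids j) F} \<in> {{}, {..<n}}"
    using i by (auto split: if_splits)
  moreover have "all_or_none n (card {j. j < n \<and> selected 1 (ids j) F})
      \<longleftrightarrow> {j. j < n \<and> selected 1 (ids j) F} \<in> {{}, {..<n}}"
    by (rule all_or_none_card_iff) auto
  ultimately show ?thesis
    using perceptive_flag_iff_uniform[OF p i v] by (simp add: selection_flag_def)
qed

definition zero_net_flow :: "nat \<Rightarrow> nat \<Rightarrow> bool" where
  "zero_net_flow n c \<longleftrightarrow> int n dvd int n - 2 * int c"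

lemma zero_net_flow_iff:
  assumes "0 < n" "c \<le> n"
  shows "zero_net_flow n c \<longleftrightarrow> c = 0 \<or> 2 * c = n \<or> c = n"
proof
  assume "zero_net_flow n c"
  then obtain k where k: "int n - 2 * int c = int n * k" by (auto simp: zero_net_flow_def)
  with assms have "- int n \<le> int n * k" "int n * k \<le> int n" by linarith+
  with assms have "-1 \<le> k" "k \<le> 1"
    by (metis mult.right_neutral mult_le_cancel_left_pos mult_minus1_right of_nat_0_less_iff)+
  then have "k = -1 \<or> k = 0 \<or> k = 1" by linarith
  with k show "c = 0 \<or> 2 * c = n \<or> c = n" by auto
qed (auto simp: zero_net_flow_def)

lemma even_flag:
  assumes "valid_positions n p" "i < n"
    and "\<forall>j<n. v j = vel (if selected K (ids j) F then Left else Right)"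
  shows "(fst (observation Basic n p v i) = 0) = selection_flag K zero_net_flow ids n F"
proof -
  have "frac (atraj n p v i 1 - p i) = 0
      \<longleftrightarrow> int n dvd (\<Sum>j<n. dir_int (if selected K (ids j) F then Left else Right))"
    by (rule frac_displacement_eq_0_iff_dir[OF assms])
  also have "(\<Sum>j<n. dir_int (if selected K (ids j) F then Left else Right))
      = int n - 2 * int (card {j. j < n \<and> selected K (ids j) F})"
    by (simp add: sum_dir_int_if)
  finally show ?thesis by (simp add: selection_flag_def zero_net_flow_def)
qed

text \<open>If the candidates with
  bit \<open>b\<close> were exactly half of the agents, hence at least two distinct IDs, some bit \<open>k\<close>
  would split them strictly and the flag of round \<open>k + 1\<close> would be false.\<close>

lemma unanimous_zero_net_flow:
  fixes ids :: "nat \<Rightarrow> nat"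
  assumes n: "4 < n" and inj: "inj_on ids {..<n}" and range: "\<forall>i<n. 1 \<le> ids i \<and> ids i \<le> 2 ^ M"
    and no_split: "\<not> phase_split (Suc M) zero_net_flow ids n b"
  shows "{j. j < n \<and> survivor (Suc M) zero_net_flow ids n b (ids j) \<and> bit (ids j - 1) b} \<in> {{}, {..<n}}"
    (is "?B \<in> _")
proof (rule ccontr)
  assume contra: "?B \<notin> {{}, {..<n}}"
  define S where "S u = {j. j < n \<and> survivor (Suc M) zero_net_flow ids n b (ids j)
    \<and> bit (ids j - 1) b \<and> (u = 0 \<or> bit (ids j - 1) (u - 1))}" for u
  have S0: "S 0 = ?B" unfolding S_def by simp
  have S_sub: "S u \<subseteq> ?B" "?B \<subseteq> {..<n}" for u unfolding S_def by auto
  have flow: "c = 0 \<or> 2 * c = n \<or> c = n" if "u < Suc M" "c = card (S u)" for u c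
  proof -
    have "selection_flag (Suc M) zero_net_flow ids n (flags (Suc M) zero_net_flow ids n (b * Suc M + u))"
      using no_split that(1) unfolding phase_split_def by blast
    then have "zero_net_flow n (card (S u))"
      unfolding selection_flag_flags[OF that(1)] S_def .
    with n that(2) show ?thesis
      using card_mono[OF _ order_trans[OF S_sub]] by (subst (asm) zero_net_flow_iff) auto
  qed
  have "card ?B = 0 \<or> 2 * card ?B = n \<or> card ?B = n"
    using flow[of 0 "card ?B"] S0 by simp
  then have half: "2 * card ?B = n"
    using contra all_or_none_card_iff[OF S_sub(2)] unfolding all_or_none_def by auto
  have "?B \<noteq> {}" using contra by simp
  then obtain j where j: "j \<in> ?B" by blast
  have "card ?B \<noteq> card {j}" using half n by simp
  then have "?B \<noteq> {j}" by metis
  with j obtain j' where j': "j' \<in> ?B" "j' \<noteq> j" by blast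
  have jn: "j < n" "j' < n" using j j' by simp_all
  then have "ids j \<noteq> ids j'" using inj_on_eq_iff[OF inj] j'(2) by simp
  with jn range obtain k where k: "k < M" "bit (ids j - 1) k \<noteq> bit (ids j' - 1) k"
    using id_bits_differ[of "ids j" M "ids j'"] by blast
  have "S (Suc k) \<noteq> {}" "S (Suc k) \<noteq> ?B" using j j' k unfolding S_def by auto
  moreover have "finite ?B" using S_sub(2) finite_subset by blast
  ultimately have "0 < card (S (Suc k))" "card (S (Suc k)) < card ?B"
    using S_sub(1)[of "Suc k"] by (auto simp: card_gt_0_iff dest: finite_subset intro!: psubset_card_mono)
  with flow[of "Suc k" "card (S (Suc k))"] k half show False by simp
qed

section \<open>The four settings\<close>

lemma solves_one_round_per_bit:
  assumes valid: "valid_algo m (elimination_algo 1 fl d1 d2)" and N: "N \<le> 2 ^ M"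
    and flag: "\<And>n ids p v F i. even n = par \<Longrightarrow> valid_positions n p \<Longrightarrow>
      \<forall>j<n. v j = vel (if selected 1 (ids j) F then d1 else d2) \<Longrightarrow> i < n \<Longrightarrow>
      fl (observation m n p v i) = selection_flag 1 all_or_none ids n F"
  shows "solves m N par (elimination_algo 1 fl d1 d2) M"
proof -
  have "solves m N par (elimination_algo 1 fl d1 d2) (1 * M)"
  proof (rule solves_elimination[where ok = all_or_none, OF valid zero_less_one N _ flag])
    show "all_or_none n 0" for n by (simp add: all_or_none_def)
    show "{j. j < n \<and> survivor 1 all_or_none ids n b (ids j) \<and> bit (ids j - 1) b} \<in> {{}, {..<n}}"
      if "\<not> phase_split 1 all_or_none ids n b" for n ids b
      using that by (rule unanimous_all_or_none)
  qed
  then show ?thesis by simp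
qed

lemma solves_lazy:
  assumes "N \<le> 2 ^ M"
  shows "solves Lazy N par (elimination_algo 1 (\<lambda>ob. fst ob = 0) Right Idle) M"
proof (rule solves_one_round_per_bit[OF _ assms])
  show "valid_algo Lazy (elimination_algo 1 (\<lambda>ob. fst ob = 0) Right Idle)"
    by (simp add: valid_algo_def allowed_def)
  show "fst (observation Lazy n p v i) = 0 \<longleftrightarrow> selection_flag 1 all_or_none ids n F"
    if "valid_positions n p" "\<forall>j<n. v j = vel (if selected 1 (ids j) F then Right else Idle)"
      "i < n" for n ids p v F i
    using that by (intro lazy_flag)
qed

lemma solves_basic_odd:
  assumes "N \<le> 2 ^ M"
  shows "solves Basic N False (elimination_algo 1 (\<lambda>ob. fst ob = 0) Right Left) M"
proof (rule solves_one_round_per_bit[OF _ assms])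
  show "valid_algo Basic (elimination_algo 1 (\<lambda>ob. fst ob = 0) Right Left)"
    by (simp add: valid_algo_def allowed_def elimination_algo_def)
  show "fst (observation Basic n p v i) = 0 \<longleftrightarrow> selection_flag 1 all_or_none ids n F"
    if "even n = False" "valid_positions n p"
      "\<forall>j<n. v j = vel (if selected 1 (ids j) F then Right else Left)" "i < n" for n ids p v F i
    using that by (intro odd_flag) simp_all
qed

lemma solves_perceptive:
  assumes "N \<le> 2 ^ M"
  shows "solves Perceptive N par
    (elimination_algo 1 (\<lambda>ob. fst ob = 0 \<and> snd ob = None) Right Left) M"
proof (rule solves_one_round_per_bit[OF _ assms])
  show "valid_algo Perceptive (elimination_algo 1 (\<lambda>ob. fst ob = 0 \<and> snd ob = None) Right Left)"
    by (simp add: valid_algo_def allowed_def elimination_algo_def)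
  show "(fst (observation Perceptive n p v i) = 0 \<and> snd (observation Perceptive n p v i) = None)
      \<longleftrightarrow> selection_flag 1 all_or_none ids n F"
    if "valid_positions n p" "\<forall>j<n. v j = vel (if selected 1 (ids j) F then Right else Left)"
      "i < n" for n ids p v F i
    using that by (intro perceptive_flag)
qed

lemma solves_basic_even:
  assumes "N \<le> 2 ^ M"
  shows "solves Basic N True (elimination_algo (Suc M) (\<lambda>ob. fst ob = 0) Left Right) (Suc M * M)"
proof (rule solves_elimination[where ok = zero_net_flow, OF _ zero_less_Suc assms])
  show "valid_algo Basic (elimination_algo (Suc M) (\<lambda>ob. fst ob = 0) Left Right)"
    by (simp add: valid_algo_def allowed_def elimination_algo_def)
  show "fst (observation Basic n p v i) = 0 \<longleftrightarrow> selection_flag (Suc M) zero_net_flow ids n F"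
    if "valid_positions n p" "\<forall>j<n. v j = vel (if selected (Suc M) (ids j) F then Left else Right)"
      "i < n" for n ids p v F i
    using that by (intro even_flag)
  show "zero_net_flow n 0" for n by (simp add: zero_net_flow_def)
  show "{j. j < n \<and> survivor (Suc M) zero_net_flow ids n b (ids j) \<and> bit (ids j - 1) b}
      \<in> {{}, {..<n}}"
    if "4 < n" "inj_on ids {..<n}" "\<forall>i<n. 1 \<le> ids i \<and> ids i \<le> 2 ^ M"
      "\<not> phase_split (Suc M) zero_net_flow ids n b" for n ids b
    using that by (rule unanimous_zero_net_flow)
qed

lemma le_two_power_ceiling_log: "N \<le> 2 ^ nat \<lceil>log 2 (real N)\<rceil>"
proof (cases "N = 0")
  case False
  then have "real N = 2 powr log 2 (real N)" by simp
  also have "\<dots> \<le> 2 powr real (nat \<lceil>log 2 (real N)\<rceil>)"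
    using False by (intro powr_mono) auto
  finally show ?thesis by (simp add: powr_realpow)
qed simp

lemma square_rounds_bound:
  fixes N :: nat
  defines "M \<equiv> nat \<lceil>log 2 (real N)\<rceil>"
  shows "real (Suc M * M) \<le> 6 * (log 2 (real N))\<^sup>2"
proof (cases "N \<le> 1")
  case True
  then have "log 2 (real N) = 0" by (cases N) (auto simp: log_def)
  then show ?thesis by (simp add: M_def)
next
  case False
  define L where "L = log 2 (real N)"
  have "1 \<le> L" unfolding L_def using False by simp
  moreover have "real M \<le> L + 1" unfolding M_def L_def[symmetric] using \<open>1 \<le> L\<close> by linarith
  ultimately have "real M + 1 \<le> 3 * L" "real M \<le> 2 * L" by linarith+
  then have "(real M + 1) * real M \<le> (3 * L) * (2 * L)" by (intro mult_mono) auto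
  then show ?thesis by (simp add: L_def power2_eq_square algebra_simps)
qed

theorem lemma10:
  shows "(\<exists>C::real. \<forall>N. \<exists>A T. real T \<le> C * (log 2 (real N))^2 \<and> solves Basic N True A T)
       \<and> (\<forall>N. \<exists>A T. T \<le> nat \<lceil>log 2 (real N)\<rceil> \<and> solves Basic N False A T)
       \<and> (\<forall>N par. \<exists>A T. T \<le> nat \<lceil>log 2 (real N)\<rceil> \<and> solves Lazy N par A T)
       \<and> (\<forall>N par. \<exists>A T. T \<le> nat \<lceil>log 2 (real N)\<rceil> \<and> solves Perceptive N par A T)"
proof -
  have "\<forall>N. \<exists>A T. real T \<le> 6 * (log 2 (real N))^2 \<and> solves Basic N True A T"
    using solves_basic_even[OF le_two_power_ceiling_log] square_rounds_bound by blast
  moreover have "\<forall>N. \<exists>A T. T \<le> nat \<lceil>log 2 (real N)\<rceil> \<and> solves Basic N False A T"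
    using solves_basic_odd[OF le_two_power_ceiling_log] by blast
  moreover have "\<forall>N par. \<exists>A T. T \<le> nat \<lceil>log 2 (real N)\<rceil> \<and> solves Lazy N par A T"
    using solves_lazy[OF le_two_power_ceiling_log] by blast
  moreover have "\<forall>N par. \<exists>A T. T \<le> nat \<lceil>log 2 (real N)\<rceil> \<and> solves Perceptive N par A T"
    using solves_perceptive[OF le_two_power_ceiling_log] by blast
  ultimately show ?thesis by blast
qed

end
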